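(* Let $h,v$ be permutations of $\Lambda=\{1,\dots,d\}$ such that $\langle h,v\rangle$ acts transitively on $\Lambda$, and let $M\ge0$ be an integer. Then the combinatorial data $(\pi_0,\pi_1^M)$ is irreducible.
   Context: $\pi_0,\pi_1^M:\Lambda\times\{L,R\}\to\{1,\dots,2d\}$ are the bijections $\pi_0(\lambda,L)=2\lambda-1$, $\pi_0(\lambda,R)=2\lambda$, $\pi_1^M(\lambda,L)=2vh^M(\lambda)$, $\pi_1^M(\lambda,R)=2vh^{M+1}(\lambda)-1$. A pair of bijections $(\pi_0,\pi_1)$ from a $k$-element set $\mathcal{A}$ to $\{1,\dots,k\}$ is irreducible if there is no $1\le j<k$ with $\pi_0^{-1}(\{1,\dots,j\})=\pi_1^{-1}(\{1,\dots,j\})$. *)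

theory Defs
  imports "HOL-Combinatorics.Permutations"
begin

datatype side = L | R

definition alphabet :: "nat \<Rightarrow> (nat \<times> side) set" where
  "alphabet d = {1..d} \<times> UNIV"

definition pi0 :: "nat \<times> side \<Rightarrow> nat" where
  "pi0 a = (case a of (l, L) \<Rightarrow> 2 * l - 1 | (l, R) \<Rightarrow> 2 * l)"

definition pi1 :: "(nat \<Rightarrow> nat) \<Rightarrow> (nat \<Rightarrow> nat) \<Rightarrow> nat \<Rightarrow> nat \<times> side \<Rightarrow> nat" where
  "pi1 h v M a = (case a of (l, L) \<Rightarrow> 2 * v ((h ^^ M) l)
                           | (l, R) \<Rightarrow> 2 * v ((h ^^ (M + 1)) l) - 1)"

definition irreducible_pair :: "'a set \<Rightarrow> ('a \<Rightarrow> nat) \<Rightarrow> ('a \<Rightarrow> nat) \<Rightarrow> bool" where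
  "irreducible_pair A p0 p1 \<longleftrightarrow>
     bij_betw p0 A {1..card A} \<and> bij_betw p1 A {1..card A} \<and>
     \<not> (\<exists>j. 1 \<le> j \<and> j < card A \<and>
            {a \<in> A. p0 a \<in> {1..j}} = {a \<in> A. p1 a \<in> {1..j}})"

inductive_set gen_group :: "(nat \<Rightarrow> nat) \<Rightarrow> (nat \<Rightarrow> nat) \<Rightarrow> (nat \<Rightarrow> nat) set"
  for h v where
  gid: "id \<in> gen_group h v"
| gh: "g \<in> gen_group h v \<Longrightarrow> h \<circ> g \<in> gen_group h v"
| gv: "g \<in> gen_group h v \<Longrightarrow> v \<circ> g \<in> gen_group h v"
| ghi: "g \<in> gen_group h v \<Longrightarrow> inv h \<circ> g \<in> gen_group h v"
| gvi: "g \<in> gen_group h v \<Longrightarrow> inv v \<circ> g \<in> gen_group h v"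

definition transitive_on :: "(nat \<Rightarrow> nat) set \<Rightarrow> nat set \<Rightarrow> bool" where
  "transitive_on G S \<longleftrightarrow> (\<forall>x\<in>S. \<forall>y\<in>S. \<exists>g\<in>G. g x = y)"

end

theory Submission
  imports Defs "HOL-Combinatorics.Cycles"
begin

text \<open>
Suppose the first \<open>j\<close> positions under \<open>\<pi>\<^sub>0\<close> and under \<open>\<pi>\<^sub>1\<^sup>M\<close> are occupied by the same letters.
Write \<open>f = v \<circ> h\<^sup>M\<close>, so that \<open>\<pi>\<^sub>1\<^sup>M(\<lambda>,L) = 2 f(\<lambda>)\<close> and \<open>\<pi>\<^sub>1\<^sup>M(\<lambda>,R) = 2 f(h(\<lambda>)) - 1\<close>.
If \<open>j = 2k + 1\<close>, the letters \<open>(\<lambda>,L)\<close> with \<open>\<lambda> \<le> k + 1\<close> lie in the first \<open>j\<close> positions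
under \<open>\<pi>\<^sub>0\<close>, so \<open>f\<close> would map \<open>{1..k+1}\<close> injectively into \<open>{1..k}\<close>.
If \<open>j = 2k\<close>, the set \<open>{1..k}\<close> is invariant under \<open>f\<close> and \<open>f \<circ> h\<close>, hence under \<open>h\<close>
and \<open>v\<close>, which contradicts transitivity of \<open>\<langle>h,v\<rangle>\<close>.
\<close>

definition stabilizes :: "'a set \<Rightarrow> 'a set \<Rightarrow> ('a \<Rightarrow> 'a) \<Rightarrow> bool" where
  "stabilizes S B f \<longleftrightarrow> (\<forall>x\<in>S. f x \<in> B \<longleftrightarrow> x \<in> B)"

lemma stabilizes_id: "stabilizes S B id"
  by (simp add: stabilizes_def)

lemma stabilizes_comp:
  "stabilizes S B f \<Longrightarrow> stabilizes S B g \<Longrightarrow> g ` S \<subseteq> S \<Longrightarrow> stabilizes S B (f \<circ> g)"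
  by (auto simp: stabilizes_def)

lemma stabilizes_comp_cancel_left:
  "stabilizes S B (f \<circ> g) \<Longrightarrow> stabilizes S B f \<Longrightarrow> g ` S \<subseteq> S \<Longrightarrow> stabilizes S B g"
  by (auto simp: stabilizes_def)

lemma stabilizes_comp_cancel_right:
  "stabilizes S B (f \<circ> g) \<Longrightarrow> stabilizes S B g \<Longrightarrow> S \<subseteq> g ` S \<Longrightarrow> stabilizes S B f"
  by (fastforce simp: stabilizes_def)

lemma stabilizes_funpow:
  assumes "stabilizes S B f" and "f permutes S"
  shows "stabilizes S B (f ^^ n)"
proof (induction n)
  case 0
  then show ?case by (simp add: stabilizes_def)
next
  case (Suc n)
  have "(f ^^ n) ` S \<subseteq> S"
    using permutes_image[OF permutes_funpow[OF assms(2)]] by simp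
  from stabilizes_comp[OF assms(1) Suc this] show ?case
    by (simp only: funpow.simps(2))
qed

lemma stabilizes_inv:
  assumes "g permutes S" and "stabilizes S B g"
  shows "stabilizes S B (inv g)"
proof (rule stabilizes_comp_cancel_right)
  show "stabilizes S B (inv g \<circ> g)"
    using permutes_inv_o(2)[OF assms(1)] stabilizes_id by metis
  show "S \<subseteq> g ` S"
    using permutes_image[OF assms(1)] by simp
qed fact

lemma gen_group_stabilizes:
  assumes h: "h permutes S" and v: "v permutes S"
    and "stabilizes S B h" and "stabilizes S B v"
    and "g \<in> gen_group h v"
  shows "g ` S \<subseteq> S \<and> stabilizes S B g"
proof -
  have step: "(a \<circ> g) ` S \<subseteq> S \<and> stabilizes S B (a \<circ> g)"
    if a: "a permutes S" "stabilizes S B a" and g: "g ` S \<subseteq> S" "stabilizes S B g" for a g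
  proof
    show "(a \<circ> g) ` S \<subseteq> S"
      using g(1) permutes_image[OF a(1)] by (auto simp: image_comp[symmetric])
  qed (rule stabilizes_comp[OF a(2) g(2,1)])
  from \<open>g \<in> gen_group h v\<close> show ?thesis
  proof (induction rule: gen_group.induct)
    case gid
    then show ?case by (simp add: stabilizes_def)
  next
    case (gh g)
    then show ?case using step[OF h assms(3)] by blast
  next
    case (gv g)
    then show ?case using step[OF v assms(4)] by blast
  next
    case (ghi g)
    then show ?case using step[OF permutes_inv[OF h] stabilizes_inv[OF h assms(3)]] by blast
  next
    case (gvi g)
    then show ?case using step[OF permutes_inv[OF v] stabilizes_inv[OF v assms(4)]] by blast
  qed
qed

lemma stabilizes_generators:
  assumes h: "h permutes S"
    and vh: "stabilizes S B (v \<circ> h ^^ M)" and "stabilizes S B (v \<circ> h ^^ M \<circ> h)"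
  shows "stabilizes S B h" and "stabilizes S B v"
proof -
  show h_stab: "stabilizes S B h"
    using stabilizes_comp_cancel_left assms permutes_image[OF h] by (metis order_refl)
  have "S \<subseteq> (h ^^ M) ` S"
    using permutes_image[OF permutes_funpow[OF h]] by simp
  then show "stabilizes S B v"
    using stabilizes_comp_cancel_right[OF vh stabilizes_funpow[OF h_stab h]] by blast
qed

lemma not_transitive_on_if_stabilizes:
  assumes "h permutes S" and "v permutes S"
    and "stabilizes S B h" and "stabilizes S B v"
    and "x \<in> S \<inter> B" and "y \<in> S - B"
  shows "\<not> transitive_on (gen_group h v) S"
proof
  assume "transitive_on (gen_group h v) S"
  then obtain g where "g \<in> gen_group h v" "g x = y"
    using assms(5,6) unfolding transitive_on_def by blast
  then show False
    using gen_group_stabilizes[OF assms(1-4)] assms(5,6) unfolding stabilizes_def by blast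
qed

lemma card_alphabet: "card (alphabet d) = 2 * d"
proof -
  have "(UNIV :: side set) = {L, R}"
    using side.exhaust by blast
  then have "card (UNIV :: side set) = 2"
    by (metis card_2_iff side.distinct(1))
  then show ?thesis
    unfolding alphabet_def by (simp add: card_cartesian_product)
qed

lemma bij_betw_alphabet_interleave:
  assumes f: "f permutes {1..d}" and g: "g permutes {1..d}" and "s \<noteq> t"
    and odd: "\<And>l. p (l, s) = 2 * f l - 1" and even: "\<And>l. p (l, t) = 2 * g l"
  shows "bij_betw p (alphabet d) {1..2*d}"
proof -
  have side: "x = s \<or> x = t" for x :: side
    using \<open>s \<noteq> t\<close> by (cases x; cases s; cases t) auto
  have range: "f l \<in> {1..d}" "g l \<in> {1..d}" if "l \<in> {1..d}" for l
    using that permutes_in_image[OF f] permutes_in_image[OF g] by blast+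
  have image: "p ` alphabet d \<subseteq> {1..2*d}"
  proof (rule image_subsetI)
    fix a assume "a \<in> alphabet d"
    then obtain l x where "a = (l, x)" and l: "l \<in> {1..d}"
      unfolding alphabet_def by auto
    then show "p a \<in> {1..2*d}"
      using side[of x] range[OF l] odd even by auto
  qed
  have parity: "odd (p (l, x)) \<longleftrightarrow> x = s" if "l \<in> {1..d}" for l x
    using side[of x] range[OF that] odd even \<open>s \<noteq> t\<close> by (cases "x = s") (auto simp: odd_pos)
  have "inj_on p (alphabet d)"
  proof (rule inj_onI)
    fix a b assume "a \<in> alphabet d" "b \<in> alphabet d" and pab: "p a = p b"
    then obtain l x l' y where ab: "a = (l, x)" "b = (l', y)" "l \<in> {1..d}" "l' \<in> {1..d}"
      unfolding alphabet_def by auto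
    have "x = y"
      using parity[OF ab(3), of x] parity[OF ab(4), of y] pab ab(1,2) side[of x] side[of y] by metis
    have "l = l'"
    proof (cases "x = s")
      case True
      then have "f l = f l'"
        using pab ab odd range \<open>x = y\<close> by fastforce
      then show ?thesis using permutes_inj[OF f] by (simp add: inj_eq)
    next
      case False
      then have "x = t" "y = t" using side \<open>x = y\<close> by blast+
      then have "g l = g l'"
        using pab ab even by simp
      then show ?thesis using permutes_inj[OF g] by (simp add: inj_eq)
    qed
    with ab \<open>x = y\<close> show "a = b"
      by simp
  qed
  moreover have "p ` alphabet d = {1..2*d}"
    using card_subset_eq[OF _ image] card_image[OF \<open>inj_on p (alphabet d)\<close>] card_alphabet by simp
  ultimately show ?thesis
    by (rule bij_betw_imageI)
qed

lemma irreducible_pairI: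
  assumes "bij_betw p0 A {1..card A}" and "bij_betw p1 A {1..card A}"
    and "\<And>j. 1 \<le> j \<Longrightarrow> j < card A \<Longrightarrow> \<forall>a\<in>A. p0 a \<le> j \<longleftrightarrow> p1 a \<le> j \<Longrightarrow> False"
  shows "irreducible_pair A p0 p1"
proof -
  have "\<forall>a\<in>A. p0 a \<ge> 1 \<and> p1 a \<ge> 1"
    using assms(1,2) bij_betw_apply by fastforce
  then have "{a \<in> A. p0 a \<in> {1..j}} = {a \<in> A. p1 a \<in> {1..j}} \<Longrightarrow> \<forall>a\<in>A. p0 a \<le> j \<longleftrightarrow> p1 a \<le> j"
    for j by auto
  then show ?thesis
    unfolding irreducible_pair_def using assms by blast
qed

lemma odd_cut_impossible:
  assumes f: "f permutes {1..d}" and pL: "\<And>l. p (l, L) = 2 * f l" and "k < d"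
    and cut: "\<forall>a\<in>alphabet d. pi0 a \<le> 2 * k + 1 \<longleftrightarrow> p a \<le> 2 * k + 1"
  shows False
proof -
  have "f ` {1..k+1} \<subseteq> {1..k}"
  proof
    fix y assume "y \<in> f ` {1..k+1}"
    then obtain l where l: "l \<in> {1..k+1}" "y = f l" by auto
    with \<open>k < d\<close> have "(l, L) \<in> alphabet d" "f l \<in> {1..d}"
      using permutes_in_image[OF f] unfolding alphabet_def by auto
    then show "y \<in> {1..k}"
      using cut l pL[of l] by (auto simp: pi0_def)
  qed
  then have "card {1..k+1} \<le> card {1..k}"
    using card_inj_on_le permutes_inj_on[OF f] by blast
  then show False by simp
qed

lemma even_cut_stabilizes:
  assumes f: "f permutes {1..d}" and g: "g permutes {1..d}"
    and pL: "\<And>l. p (l, L) = 2 * f l" and pR: "\<And>l. p (l, R) = 2 * g l - 1"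
    and cut: "\<forall>a\<in>alphabet d. pi0 a \<le> 2 * k \<longleftrightarrow> p a \<le> 2 * k"
  shows "stabilizes {1..d} {..k} f" and "stabilizes {1..d} {..k} g"
proof -
  have cut_at: "pi0 (l, s) \<le> 2 * k \<longleftrightarrow> p (l, s) \<le> 2 * k" if "l \<in> {1..d}" for l s
    using cut that unfolding alphabet_def by blast
  have "f l \<in> {..k} \<longleftrightarrow> l \<in> {..k}" if "l \<in> {1..d}" for l
    using cut_at[OF that, of L] that pL[of l] by (auto simp: pi0_def)
  moreover have "g l \<in> {..k} \<longleftrightarrow> l \<in> {..k}" if "l \<in> {1..d}" for l
    using cut_at[OF that, of R] that pR[of l] permutes_in_image[OF g, of l] by (auto simp: pi0_def)
  ultimately show "stabilizes {1..d} {..k} f" "stabilizes {1..d} {..k} g"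
    unfolding stabilizes_def by blast+
qed

theorem corollary5p3:
  fixes d M :: nat and h v :: "nat \<Rightarrow> nat"
  assumes "h permutes {1..d}" and "v permutes {1..d}"
    and "transitive_on (gen_group h v) {1..d}"
  shows "irreducible_pair (alphabet d) pi0 (pi1 h v M)"
proof -
  define f where "f = v \<circ> h ^^ M"
  have f: "f permutes {1..d}" and fh: "f \<circ> h permutes {1..d}"
    unfolding f_def using permutes_funpow[OF assms(1)] assms(1,2) by (simp_all add: permutes_compose)
  have pL: "pi1 h v M (l, L) = 2 * f l" and pR: "pi1 h v M (l, R) = 2 * (f \<circ> h) l - 1" for l
    unfolding pi1_def f_def by (simp_all add: funpow_swap1)
  show ?thesis
  proof (rule irreducible_pairI; unfold card_alphabet)
    show "bij_betw pi0 (alphabet d) {1..2*d}"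
      by (rule bij_betw_alphabet_interleave[OF permutes_id permutes_id, of L R]) (simp_all add: pi0_def)
    show "bij_betw (pi1 h v M) (alphabet d) {1..2*d}"
      by (rule bij_betw_alphabet_interleave[OF fh f, of R L]) (simp_all add: pL pR)
  next
    fix j assume j: "1 \<le> j" "j < 2 * d"
      and cut: "\<forall>a\<in>alphabet d. pi0 a \<le> j \<longleftrightarrow> pi1 h v M a \<le> j"
    obtain k where "j = 2 * k \<or> j = 2 * k + 1"
      by (metis oddE evenE)
    then show False
    proof
      assume "j = 2 * k"
      with cut have "stabilizes {1..d} {..k} f" "stabilizes {1..d} {..k} (f \<circ> h)"
        using even_cut_stabilizes[OF f fh pL pR] by blast+
      then have "stabilizes {1..d} {..k} h" "stabilizes {1..d} {..k} v"
        using stabilizes_generators[OF assms(1)] unfolding f_def by blast+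
      then show False
        using not_transitive_on_if_stabilizes[of h "{1..d}" v "{..k}" 1 d] assms \<open>j = 2 * k\<close> j
        by auto
    next
      assume "j = 2 * k + 1"
      then show False
        using odd_cut_impossible[OF f pL, of k] cut j by simp
    qed
  qed
qed

end
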